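(* Consider a slotted system with diversity. There are $N$ users, $N_{sub}\ge2$ sub-carriers and slots $1,\dots,T$. In every slot, independently, the BS chooses a user uniformly at random and a sub-carrier uniformly at random, and sends an update to the chosen user on the chosen sub-carrier. The adversary uses a blocking matrix $\sigma\in\{0,1\}^{N_{sub}\times T}$, where $\sigma_j(t)=0$ means sub-carrier $j$ is blocked in slot $t$. Feasibility means $\sum_{j,t}(1-\sigma_j(t))\le\alpha T$ and at most one sub-carrier is blocked per slot, where $0<\alpha<1$. Ages satisfy $a_i(1)=1$, $a_i(t+1)=1$ if user $i$ is chosen in slot $t$ on an unblocked sub-carrier, and $a_i(t+1)=a_i(t)+1$ otherwise. The average age is $\Delta^{\sigma}_T=\frac1T\sum_{t=1}^T\frac1N\sum_i\mathbb E[a_i(t)]$. Then $$\limsup_{T\to\infty}\ \sup_{\sigma\text{ feasible}}\Delta^{\sigma}_T\le\frac{N N_{sub}}{N_{sub}-1}.$$ *)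

theory Defs
  imports "HOL-Probability.Probability"
begin

(* Users are 0..<N, sub-carriers 0..<Nsub, slots 1..T.
   An outcome w :: nat => nat * nat gives, for each slot t, the chosen (user, sub-carrier).
   A blocking matrix sig :: nat => nat => nat, sig j t in {0,1}; sig j t = 0 means
   sub-carrier j is blocked in slot t. *)

definition feasible :: "nat \<Rightarrow> nat \<Rightarrow> real \<Rightarrow> (nat \<Rightarrow> nat \<Rightarrow> nat) \<Rightarrow> bool" where
  "feasible Nsub T \<alpha> sig \<longleftrightarrow>
     (\<forall>j<Nsub. \<forall>t\<in>{1..T}. sig j t \<in> {0, 1}) \<and>
     real (\<Sum>j<Nsub. \<Sum>t=1..T. 1 - sig j t) \<le> \<alpha> * real T \<and>
     (\<forall>t\<in>{1..T}. card {j. j < Nsub \<and> sig j t = 0} \<le> 1)"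

(* age_aux sig w i n = a_i(n+1) *)
fun age_aux :: "(nat \<Rightarrow> nat \<Rightarrow> nat) \<Rightarrow> (nat \<Rightarrow> nat \<times> nat) \<Rightarrow> nat \<Rightarrow> nat \<Rightarrow> nat" where
  "age_aux sig w i 0 = 1"
| "age_aux sig w i (Suc n) =
     (if fst (w (Suc n)) = i \<and> sig (snd (w (Suc n))) (Suc n) = 1 then 1
      else age_aux sig w i n + 1)"

definition age :: "(nat \<Rightarrow> nat \<Rightarrow> nat) \<Rightarrow> (nat \<Rightarrow> nat \<times> nat) \<Rightarrow> nat \<Rightarrow> nat \<Rightarrow> nat" where
  "age sig w i t = age_aux sig w i (t - 1)"

definition slots_pmf :: "nat \<Rightarrow> nat \<Rightarrow> nat \<Rightarrow> (nat \<Rightarrow> nat \<times> nat) pmf" where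
  "slots_pmf N Nsub T = Pi_pmf {1..T} (0, 0) (\<lambda>_. pmf_of_set ({..<N} \<times> {..<Nsub}))"

definition avg_age :: "nat \<Rightarrow> nat \<Rightarrow> nat \<Rightarrow> (nat \<Rightarrow> nat \<Rightarrow> nat) \<Rightarrow> real" where
  "avg_age N Nsub T sig =
     (1 / real T) * (\<Sum>t=1..T. (1 / real N) *
        (\<Sum>i<N. measure_pmf.expectation (slots_pmf N Nsub T) (\<lambda>w. real (age sig w i t))))"

end

theory Submission
  imports Defs
begin

text \<open>
  Whatever the adversary does in a slot, at most one of the \<open>Nsub\<close> sub-carriers is blocked,
  so a fixed user is served on an unblocked sub-carrier with probability at least
  \<open>p = (Nsub - 1) / (N * Nsub)\<close>, independently of the earlier slots. Hence
  \<open>E a(t+1) \<le> 1 + (1 - p) E a(t)\<close>, and since \<open>1/p\<close> is the fixed point of this recursion and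
  \<open>a(1) = 1 \<le> 1/p\<close>, every expected age is at most \<open>1/p = N * Nsub / (Nsub - 1)\<close>. The bound is
  uniform in \<open>T\<close> and in the blocking pattern.
\<close>

lemma expectation_pair_pmf_finite:
  fixes h :: "'a \<times> 'b \<Rightarrow> real"
  assumes "finite (set_pmf p)" "finite (set_pmf q)"
  shows "measure_pmf.expectation (pair_pmf p q) h =
         measure_pmf.expectation p (\<lambda>a. measure_pmf.expectation q (\<lambda>b. h (a, b)))"
proof -
  have "measure_pmf.expectation (pair_pmf p q) h =
        (\<Sum>x\<in>set_pmf p \<times> set_pmf q. h x * pmf (pair_pmf p q) x)"
    using assms by (intro integral_measure_pmf_real) auto
  also have "\<dots> = (\<Sum>a\<in>set_pmf p. \<Sum>b\<in>set_pmf q. h (a, b) * (pmf p a * pmf q b))"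
    by (subst sum.cartesian_product, intro sum.cong refl) (auto simp: pmf_pair)
  also have "\<dots> = (\<Sum>a\<in>set_pmf p. (\<Sum>b\<in>set_pmf q. h (a, b) * pmf q b) * pmf p a)"
    by (intro sum.cong refl, subst sum_distrib_right) (simp add: mult_ac)
  also have "\<dots> = measure_pmf.expectation p (\<lambda>a. measure_pmf.expectation q (\<lambda>b. h (a, b)))"
    using assms by (simp add: integral_measure_pmf_real[where A = "set_pmf p"]
                              integral_measure_pmf_real[where A = "set_pmf q"])
  finally show ?thesis .
qed

lemma age_aux_fun_upd_future:
  "n < m \<Longrightarrow> age_aux sig (w(m := y)) i n = age_aux sig w i n"
  by (induction n) auto

lemma expectation_age_aux_Suc:
  assumes "finite A" "Suc n \<in> A" "\<And>t. t \<in> A \<Longrightarrow> finite (set_pmf (D t))"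
  shows "measure_pmf.expectation (Pi_pmf A d D) (\<lambda>w. real (age_aux sig w i (Suc n))) =
         1 + (1 - measure_pmf.prob (D (Suc n)) {y. fst y = i \<and> sig (snd y) (Suc n) = 1}) *
             measure_pmf.expectation (Pi_pmf (A - {Suc n}) d D) (\<lambda>w. real (age_aux sig w i n))"
proof -
  define R where "R = {y. fst y = i \<and> sig (snd y) (Suc n) = 1}"
  define P where "P = Pi_pmf (A - {Suc n}) d D"
  define E where "E = measure_pmf.expectation P (\<lambda>w. real (age_aux sig w i n))"
  have A_eq: "A = insert (Suc n) (A - {Suc n})"
    using assms(2) by blast
  have fin_D: "finite (set_pmf (D (Suc n)))"
    using assms by blast
  have fin_P: "finite (set_pmf P)"
    using assms by (auto simp: P_def set_Pi_pmf intro!: finite_PiE_dflt)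
  have "measure_pmf.expectation (Pi_pmf A d D) (\<lambda>w. real (age_aux sig w i (Suc n))) =
        measure_pmf.expectation (pair_pmf (D (Suc n)) P)
          (\<lambda>(y, w). if y \<in> R then 1 else real (age_aux sig w i n) + 1)"
    by (subst A_eq, subst Pi_pmf_insert)
       (use assms in \<open>auto simp: P_def R_def age_aux_fun_upd_future
          intro!: Bochner_Integration.integral_cong\<close>)
  also have "\<dots> = measure_pmf.expectation (D (Suc n)) (\<lambda>y. measure_pmf.expectation P
                 (\<lambda>w. if y \<in> R then 1 else real (age_aux sig w i n) + 1))"
    by (simp add: expectation_pair_pmf_finite[OF fin_D fin_P])
  also have "\<dots> = measure_pmf.expectation (D (Suc n)) (\<lambda>y. E + 1 - E * indicator R y)"
  proof (rule Bochner_Integration.integral_cong[OF refl])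
    fix y
    show "measure_pmf.expectation P (\<lambda>w. if y \<in> R then 1 else real (age_aux sig w i n) + 1)
          = E + 1 - E * indicator R y"
      using integrable_measure_pmf_finite[OF fin_P, of "\<lambda>w. real (age_aux sig w i n)"]
      by (cases "y \<in> R") (simp_all add: E_def)
  qed
  also have "\<dots> = E + 1 - E * measure_pmf.prob (D (Suc n)) R"
    by (simp add: integrable_measure_pmf_finite[OF fin_D])
  finally show ?thesis
    by (simp add: R_def E_def P_def algebra_simps)
qed

lemma expectation_age_aux_le_inverse:
  assumes "finite A" "{1..n} \<subseteq> A" "\<And>t. t \<in> A \<Longrightarrow> finite (set_pmf (D t))"
    and "0 < p" "p \<le> 1"
    and "\<And>t. t \<in> {1..n} \<Longrightarrow> p \<le> measure_pmf.prob (D t) {y. fst y = i \<and> sig (snd y) t = 1}"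
  shows "measure_pmf.expectation (Pi_pmf A d D) (\<lambda>w. real (age_aux sig w i n)) \<le> 1 / p"
  using assms(1-3,6)
proof (induction n arbitrary: A)
  case 0
  then show ?case
    using \<open>0 < p\<close> \<open>p \<le> 1\<close> by simp
next
  case (Suc n)
  define E where "E = measure_pmf.expectation (Pi_pmf (A - {Suc n}) d D) (\<lambda>w. real (age_aux sig w i n))"
  define q where "q = measure_pmf.prob (D (Suc n)) {y. fst y = i \<and> sig (snd y) (Suc n) = 1}"
  have "E \<le> 1 / p"
    unfolding E_def using Suc.prems by (intro Suc.IH) auto
  moreover have "0 \<le> E"
    unfolding E_def by simp
  moreover have "p \<le> q"
    unfolding q_def using Suc.prems by simp
  moreover have "q \<le> 1"
    unfolding q_def by simp
  ultimately have "1 + (1 - q) * E \<le> 1 + (1 - p) * (1 / p)"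
    by (intro add_left_mono mult_mono) auto
  also have "\<dots> = 1 / p"
    using \<open>0 < p\<close> by (simp add: field_simps)
  finally show ?case
    using Suc.prems unfolding E_def q_def by (subst expectation_age_aux_Suc) auto
qed

definition blocks_at_most_one :: "nat \<Rightarrow> (nat \<Rightarrow> nat \<Rightarrow> nat) \<Rightarrow> nat \<Rightarrow> bool" where
  "blocks_at_most_one Nsub sig t \<longleftrightarrow>
     (\<forall>j<Nsub. sig j t \<in> {0, 1}) \<and> card {j. j < Nsub \<and> sig j t = 0} \<le> 1"

lemma feasible_blocks_at_most_one:
  "feasible Nsub T \<alpha> sig \<Longrightarrow> t \<in> {1..T} \<Longrightarrow> blocks_at_most_one Nsub sig t"
  by (simp add: feasible_def blocks_at_most_one_def)

lemma card_unblocked_ge: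
  assumes "blocks_at_most_one Nsub sig t"
  shows "Nsub - 1 \<le> card {j. j < Nsub \<and> sig j t = 1}"
proof -
  define Z where "Z = {j. j < Nsub \<and> sig j t = 0}"
  have "sig j t = 1 \<longleftrightarrow> sig j t \<noteq> 0" if "j < Nsub" for j
    using assms that by (auto simp: blocks_at_most_one_def)
  then have "{j. j < Nsub \<and> sig j t = 1} = {..<Nsub} - Z"
    by (auto simp: Z_def)
  moreover have "card ({..<Nsub} - Z) = Nsub - card Z"
    by (subst card_Diff_subset) (auto simp: Z_def)
  moreover have "card Z \<le> 1"
    using assms by (simp add: blocks_at_most_one_def Z_def)
  ultimately show ?thesis
    by simp
qed

lemma prob_served_unblocked_ge:
  assumes "i < N" "0 < Nsub" "blocks_at_most_one Nsub sig t"
  shows "(real Nsub - 1) / (real N * real Nsub) \<le>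
         measure_pmf.prob (pmf_of_set ({..<N} \<times> {..<Nsub})) {y. fst y = i \<and> sig (snd y) t = 1}"
proof -
  define S where "S = {..<N} \<times> {..<Nsub}"
  define R where "R = {y. fst y = i \<and> sig (snd y) t = 1}"
  have "{i} \<times> {j. j < Nsub \<and> sig j t = 1} \<subseteq> S \<inter> R"
    using assms(1) by (auto simp: S_def R_def)
  then have "card ({i} \<times> {j. j < Nsub \<and> sig j t = 1}) \<le> card (S \<inter> R)"
    by (intro card_mono) (auto simp: S_def)
  then have "Nsub - 1 \<le> card (S \<inter> R)"
    using card_unblocked_ge[OF assms(3)] by (simp add: card_cartesian_product)
  then have "real Nsub - 1 \<le> real (card (S \<inter> R))"
    using assms(2) by linarith
  moreover have "S \<noteq> {}"
    using assms(1,2) by (auto simp: S_def)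
  ultimately show ?thesis
    using assms(1,2) by (simp add: measure_pmf_of_set S_def R_def card_cartesian_product
                                  divide_right_mono)
qed

lemma expectation_age_le:
  assumes "i < N" "2 \<le> Nsub" "t \<in> {1..T}"
    and "\<And>s. s \<in> {1..T} \<Longrightarrow> blocks_at_most_one Nsub sig s"
  shows "measure_pmf.expectation (slots_pmf N Nsub T) (\<lambda>w. real (age sig w i t))
         \<le> real N * real Nsub / (real Nsub - 1)"
proof -
  define p where "p = (real Nsub - 1) / (real N * real Nsub)"
  have "0 < p"
    using assms(1,2) by (simp add: p_def)
  have "p \<le> 1"
  proof -
    have "1 \<le> real N"
      using assms(1) by simp
    from mult_right_mono[OF this, of "real Nsub"]
    have "real Nsub - 1 \<le> real N * real Nsub"
      by linarith
    then show ?thesis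
      unfolding p_def using assms(1,2) by (subst divide_le_eq_1_pos) auto
  qed
  have "p \<le> measure_pmf.prob (pmf_of_set ({..<N} \<times> {..<Nsub})) {y. fst y = i \<and> sig (snd y) s = 1}"
    if "s \<in> {1..t - 1}" for s
    unfolding p_def using assms that by (intro prob_served_unblocked_ge) auto
  moreover have "finite (set_pmf (pmf_of_set ({..<N} \<times> {..<Nsub})))"
    using assms(1,2) by (subst set_pmf_of_set) (auto simp: lessThan_empty_iff)
  ultimately have "measure_pmf.expectation (slots_pmf N Nsub T) (\<lambda>w. real (age sig w i t)) \<le> 1 / p"
    unfolding slots_pmf_def age_def
    using assms(3) \<open>0 < p\<close> \<open>p \<le> 1\<close> by (intro expectation_age_aux_le_inverse) auto
  then show ?thesis
    by (simp add: p_def)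
qed

lemma avg_age_le:
  assumes "1 \<le> N" "2 \<le> Nsub" "\<And>t. t \<in> {1..T} \<Longrightarrow> blocks_at_most_one Nsub sig t"
  shows "avg_age N Nsub T sig \<le> real N * real Nsub / (real Nsub - 1)"
proof (cases "T = 0")
  case True
  then show ?thesis
    using assms(2) by (simp add: avg_age_def)
next
  case False
  define K where "K = real N * real Nsub / (real Nsub - 1)"
  have "(\<Sum>t=1..T. (1 / real N) *
          (\<Sum>i<N. measure_pmf.expectation (slots_pmf N Nsub T) (\<lambda>w. real (age sig w i t))))
        \<le> (\<Sum>t=1..T. (1 / real N) * (\<Sum>i<N. K))"
    unfolding K_def using assms by (intro sum_mono mult_left_mono expectation_age_le) auto
  also have "\<dots> = real T * K"
    using assms(1) by simp
  finally show ?thesis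
    using False unfolding avg_age_def K_def by (simp add: field_simps)
qed

theorem theorem9:
  fixes N Nsub :: nat and \<alpha> :: real
  assumes "N \<ge> 1" and "Nsub \<ge> 2" and "0 < \<alpha>" and "\<alpha> < 1"
  shows "limsup (\<lambda>T. SUP sig \<in> {sig. feasible Nsub T \<alpha> sig}. ereal (avg_age N Nsub T sig))
           \<le> ereal (real N * real Nsub / (real Nsub - 1))"
proof -
  have "(SUP sig \<in> {sig. feasible Nsub T \<alpha> sig}. ereal (avg_age N Nsub T sig))
        \<le> ereal (real N * real Nsub / (real Nsub - 1))" for T
    using assms(1,2) by (intro SUP_least) (auto intro: avg_age_le feasible_blocks_at_most_one)
  then show ?thesis
    by (intro Limsup_bounded always_eventually) auto
qed

end
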